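(* Let $r,m\ge1$, $W\in\mathbb{R}^{m\times r}$, $b\in\mathbb{R}^m$, $\sigma^2>0$, and $h(z)=a(Wz+b)$ where $a(x)=\log(1+e^x)$ is applied componentwise. Suppose $Z\sim N(0,I_r)$ and $X\mid\{Z=z\}\sim N(h(z),\sigma^2I_m)$. Fix $x\in\mathbb{R}^m$, let $p(z\mid x)$ be the conditional density of $Z$ given $X=x$, and set $V(z)=-\log p(z\mid x)$. Then $V$ is bounded below, $V$ satisfies conditions (b) and (c) of Assumption A1, and for every $\gamma>0$ there exist $\alpha>0$ and $\beta\in(0,1)$ such that Assumption A2 holds for $V$ (equivalently, $V-\inf V$ satisfies Assumptions A1 and A2).
   Context: A map $\phi:\mathbb{R}^a\to\mathbb{R}^b$ has polynomial growth if there are $C>0$ and an integer $m\ge0$ with $\Vert\phi(x)\Vert\le C(1+\Vert x\Vert^m)$ for all $x$; $\mathscr{C}^\infty_{poly}$ denotes the infinitely differentiable maps such that the map and all its derivatives have polynomial growth. Norms of matrices are operator norms. Assumption A1: (a) $V(x)\ge0$ for all $x\in\mathbb{R}^r$; (b) $\Vert\nabla^2V(x)\Vert\le\nu$ for some constant $\nu>0$ and all $x$; (c) $V\in\mathscr{C}^\infty_{poly}$. Assumption A2 (for a given $\gamma>0$): there exist constants $\alpha>0$ and $0<\beta<1$ such that for all $x\in\mathbb{R}^r$, $\frac12\langle\nabla V(x),x\rangle\ge\beta V(x)+\gamma^2C_\beta\Vert x\Vert^2-\alpha$, where $C_\beta=\frac{\beta(2-\beta)}{8(1-\beta)}$. 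*)

theory Defs
  imports "HOL-Probability.Probability"
begin

definition softplus :: "real \<Rightarrow> real" where
  "softplus t = ln (1 + exp t)"

definition gen :: "real^'r^'m \<Rightarrow> real^'m \<Rightarrow> real^'r \<Rightarrow> real^'m" where
  "gen W b z = (\<chi> i. softplus ((W *v z) $ i + b $ i))"

definition prior_density :: "real^'r \<Rightarrow> real" where
  "prior_density z = (\<Prod>i\<in>UNIV. std_normal_density (z $ i))"

text \<open>Density of X given Z = z, i.e. N(h(z), sigma^2 I_m); s2 is sigma^2.\<close>
definition lik_density :: "real^'r^'m \<Rightarrow> real^'m \<Rightarrow> real \<Rightarrow> real^'m \<Rightarrow> real^'r \<Rightarrow> real" where
  "lik_density W b s2 x z = (\<Prod>i\<in>UNIV. normal_density (gen W b z $ i) (sqrt s2) (x $ i))"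

definition post_density :: "real^'r^'m \<Rightarrow> real^'m \<Rightarrow> real \<Rightarrow> real^'m \<Rightarrow> real^'r \<Rightarrow> real" where
  "post_density W b s2 x z =
     prior_density z * lik_density W b s2 x z /
     (\<integral>z'. prior_density z' * lik_density W b s2 x z' \<partial>lborel)"

definition potential :: "real^'r^'m \<Rightarrow> real^'m \<Rightarrow> real \<Rightarrow> real^'m \<Rightarrow> real^'r \<Rightarrow> real" where
  "potential W b s2 x z = - ln (post_density W b s2 x z)"

text \<open>Iterated derivatives: dderiv f [v1,...,vk] x = D^k f(x)(v1,...,vk).\<close>
fun dderiv :: "('a::real_normed_vector \<Rightarrow> real) \<Rightarrow> 'a list \<Rightarrow> 'a \<Rightarrow> real" where
  "dderiv f [] = f"
| "dderiv f (v # vs) = (\<lambda>x. frechet_derivative (dderiv f vs) (at x) v)"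

text \<open>C^infinity_poly: infinitely differentiable, and f and all its derivatives
  (operator norms of the multilinear maps D^k f(x)) have polynomial growth.\<close>
definition smooth_poly :: "('a::real_normed_vector \<Rightarrow> real) \<Rightarrow> bool" where
  "smooth_poly f \<longleftrightarrow>
     (\<forall>vs x. dderiv f vs differentiable (at x)) \<and>
     (\<forall>k::nat. \<exists>C>0. \<exists>n::nat. \<forall>x vs. length vs = k \<longrightarrow> (\<forall>v\<in>set vs. norm v \<le> 1) \<longrightarrow>
         \<bar>dderiv f vs x\<bar> \<le> C * (1 + norm x ^ n))"

definition hessian_bounded :: "('a::real_normed_vector \<Rightarrow> real) \<Rightarrow> bool" where
  "hessian_bounded f \<longleftrightarrow>
     (\<exists>\<nu>>0. \<forall>x u v. norm u \<le> 1 \<longrightarrow> norm v \<le> 1 \<longrightarrow> \<bar>dderiv f [u, v] x\<bar> \<le> \<nu>)"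

definition C_beta :: "real \<Rightarrow> real" where
  "C_beta \<beta> = \<beta> * (2 - \<beta>) / (8 * (1 - \<beta>))"

text \<open>A2 for a given gamma; \<langle>\<nabla>V(x), x\<rangle> = DV(x)(x).\<close>
definition assumption_A2 :: "('a::real_normed_vector \<Rightarrow> real) \<Rightarrow> real \<Rightarrow> bool" where
  "assumption_A2 V \<gamma> \<longleftrightarrow>
     (\<exists>\<alpha>>0. \<exists>\<beta>. 0 < \<beta> \<and> \<beta> < 1 \<and>
        (\<forall>x. (1/2) * frechet_derivative V (at x) x \<ge>
               \<beta> * V x + \<gamma>\<^sup>2 * C_beta \<beta> * (norm x)\<^sup>2 - \<alpha>))"

end

theory Submission
  imports Defs "HOL-Computational_Algebra.Polynomial"
begin

text \<open>Up to an additive constant, \<open>V(z) = \<parallel>z\<parallel>\<^sup>2/2 + \<Sum>\<^sub>i l\<^sub>i(\<langle>W\<^sub>i, z\<rangle> + b\<^sub>i)\<close> with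
  \<open>l\<^sub>i(t) = (x\<^sub>i - a(t))\<^sup>2 / (2\<sigma>\<^sup>2)\<close>, a ridge potential. Since \<open>a' = s\<close> and
  \<open>s' = s(1 - s)\<close> for the logistic function \<open>s\<close>, every derivative of \<open>l\<^sub>i\<close> has the form
  \<open>P(s) + a Q(s) + a\<^sup>2 R(s)\<close> with polynomials \<open>P, Q, R\<close>; as \<open>0 < s < 1\<close> and \<open>a(t) \<le> |t| + 1\<close>,
  all of them grow at most quadratically, and \<open>l\<^sub>i''\<close> is even bounded. This gives
  A1(b) and A1(c) through the chain rule for ridge functions. For A2 the key estimate is
  that \<open>l'(t)(t - b)/2 - \<beta> l(t)\<close> is bounded below for \<open>\<beta> \<le> 1/4\<close>: for \<open>t \<le> 0\<close> all
  terms are bounded, while for \<open>t \<ge> 0\<close> one has \<open>a(t) = t + O(1)\<close> and \<open>s(t) \<ge> 1/2\<close>, so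
  the expression is a quadratic in \<open>a(t) - x\<close> with leading coefficient \<open>\<ge> 1/4\<close>.
  The quadratic part \<open>\<parallel>z\<parallel>\<^sup>2/2\<close> of the prior then absorbs \<open>\<gamma>\<^sup>2 C\<^sub>\<beta> \<parallel>z\<parallel>\<^sup>2\<close> once
  \<open>\<beta> = 1/(4(1 + \<gamma>\<^sup>2))\<close>.\<close>

section \<open>Logistic function and softplus\<close>

lemma one_plus_exp_pos [simp]: "0 < 1 + exp (t::real)"
  by (simp add: add_pos_pos)

lemma one_plus_exp_nonzero [simp]: "1 + exp (t::real) \<noteq> 0"
  using one_plus_exp_pos[of t] by linarith

definition logistic :: "real \<Rightarrow> real" where
  "logistic t = exp t / (1 + exp t)"

lemma logistic_pos: "0 < logistic t" and logistic_less_one: "logistic t < 1"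
  unfolding logistic_def by auto

lemma logistic_le_exp: "logistic t \<le> exp t"
  unfolding logistic_def by (simp add: divide_le_eq)

lemma logistic_ge_half: "0 \<le> t \<Longrightarrow> 1/2 \<le> logistic t"
  unfolding logistic_def by (simp add: field_simps)

lemma has_real_derivative_softplus: "(softplus has_real_derivative logistic t) (at t)"
  unfolding softplus_def[abs_def] logistic_def
  by (auto intro!: derivative_eq_intros)

lemma has_real_derivative_logistic:
  "(logistic has_real_derivative logistic t * (1 - logistic t)) (at t)"
  unfolding logistic_def[abs_def]
  by (auto intro!: derivative_eq_intros simp: field_simps power2_eq_square)

type_synonym sp_poly = "real poly \<times> real poly \<times> real poly"

fun sp_eval :: "sp_poly \<Rightarrow> real \<Rightarrow> real" where
  "sp_eval (P, Q, R) t =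
     poly P (logistic t) + softplus t * poly Q (logistic t) + (softplus t)\<^sup>2 * poly R (logistic t)"

(* Evaluated at s = logistic t, [:0, 1, -1:] is logistic' t = s (1 - s) and [:0, 1:] is softplus' t = s. *)
fun sp_diff :: "sp_poly \<Rightarrow> sp_poly" where
  "sp_diff (P, Q, R) =
     (pderiv P * [:0, 1, -1:] + [:0, 1:] * Q,
      pderiv Q * [:0, 1, -1:] + smult 2 ([:0, 1:] * R),
      pderiv R * [:0, 1, -1:])"

lemma has_real_derivative_poly_logistic:
  "((\<lambda>t. poly P (logistic t)) has_real_derivative
     poly (pderiv P) (logistic t) * (logistic t * (1 - logistic t))) (at t)"
  by (rule DERIV_chain2[OF poly_DERIV has_real_derivative_logistic])

lemma has_real_derivative_sp_eval: "(sp_eval T has_real_derivative sp_eval (sp_diff T) t) (at t)"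
proof -
  obtain P Q R where T: "T = (P, Q, R)" by (cases T)
  have "((\<lambda>t. softplus t * poly Q (logistic t)) has_real_derivative
       logistic t * poly Q (logistic t)
       + softplus t * (poly (pderiv Q) (logistic t) * (logistic t * (1 - logistic t)))) (at t)"
    using DERIV_mult'[OF has_real_derivative_softplus has_real_derivative_poly_logistic]
    by (simp add: add.commute)
  moreover have "((\<lambda>t. (softplus t)\<^sup>2 * poly R (logistic t)) has_real_derivative
       2 * softplus t * logistic t * poly R (logistic t)
       + (softplus t)\<^sup>2 * (poly (pderiv R) (logistic t) * (logistic t * (1 - logistic t)))) (at t)"
    using DERIV_mult'[OF DERIV_power[OF has_real_derivative_softplus, of 2] has_real_derivative_poly_logistic]
    by (simp add: algebra_simps)
  ultimately have "(sp_eval T has_real_derivative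
      poly (pderiv P) (logistic t) * (logistic t * (1 - logistic t))
      + (logistic t * poly Q (logistic t)
         + softplus t * (poly (pderiv Q) (logistic t) * (logistic t * (1 - logistic t))))
      + (2 * softplus t * logistic t * poly R (logistic t)
         + (softplus t)\<^sup>2 * (poly (pderiv R) (logistic t) * (logistic t * (1 - logistic t))))) (at t)"
    unfolding T sp_eval.simps[abs_def] by (intro DERIV_add has_real_derivative_poly_logistic)
  then show ?thesis
    by (simp add: T algebra_simps power2_eq_square)
qed

lemma softplus_nonneg: "0 \<le> softplus t"
  unfolding softplus_def by simp

lemma softplus_le_exp: "softplus t \<le> exp t"
  unfolding softplus_def by (rule ln_add_one_self_le_self) simp

lemma softplus_ge: "t \<le> softplus t"
  using ln_le_cancel_iff[of "exp t" "1 + exp t"] by (simp add: softplus_def)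

lemma softplus_le: "softplus t \<le> \<bar>t\<bar> + 1"
proof (cases "t \<le> 0")
  case True
  then have "exp t \<le> 1" by simp
  then show ?thesis using softplus_le_exp[of t] True by linarith
next
  case False
  have "softplus t \<le> ln (2 * exp t)"
    unfolding softplus_def using False by (subst ln_le_cancel_iff) auto
  also have "\<dots> = ln 2 + t" by (simp add: ln_mult)
  also have "ln (2::real) \<le> 1" using ln_le_minus_one[of 2] by simp
  finally show ?thesis using False by simp
qed

lemma poly_bounded_on_unit_interval: "\<exists>B\<ge>0. \<forall>y\<in>{0..1::real}. \<bar>poly P y\<bar> \<le> B"
proof -
  have "compact (poly P ` {0..1::real})"
    by (rule compact_continuous_image) (auto intro: continuous_intros)
  then obtain B where "\<forall>u\<in>poly P ` {0..1::real}. norm u \<le> B"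
    using compact_imp_bounded bounded_iff by metis
  then show ?thesis by (intro exI[of _ "max B 0"]) auto
qed

lemma sp_eval_quadratic_growth: "\<exists>C. \<forall>t. \<bar>sp_eval T t\<bar> \<le> C * (1 + \<bar>t\<bar>)\<^sup>2"
proof -
  obtain P Q R where T: "T = (P, Q, R)" by (cases T)
  obtain B1 B2 B3 where "0 \<le> B1" "0 \<le> B2" "0 \<le> B3" and B: "\<And>y. y \<in> {0..1} \<Longrightarrow>
      \<bar>poly P y\<bar> \<le> B1 \<and> \<bar>poly Q y\<bar> \<le> B2 \<and> \<bar>poly R y\<bar> \<le> B3"
    using poly_bounded_on_unit_interval[of P] poly_bounded_on_unit_interval[of Q]
      poly_bounded_on_unit_interval[of R] by metis
  have "\<bar>sp_eval T t\<bar> \<le> (B1 + B2 + B3) * (1 + \<bar>t\<bar>)\<^sup>2" for t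
  proof -
    define u where "u = 1 + \<bar>t\<bar>"
    have "1 \<le> u" by (simp add: u_def)
    then have u: "1 \<le> u" "u \<le> u\<^sup>2" "1 \<le> u\<^sup>2"
      using power_increasing[of 1 2 u] by simp_all
    have a: "0 \<le> softplus t" "softplus t \<le> u"
      unfolding u_def using softplus_nonneg softplus_le by (auto simp: add.commute)
    have "logistic t \<in> {0..1}" using logistic_pos[of t] logistic_less_one[of t] by auto
    note Bt = B[OF this]
    have "\<bar>softplus t * poly Q (logistic t)\<bar> \<le> u * B2"
      unfolding abs_mult using a Bt by (intro mult_mono) auto
    moreover have "\<bar>(softplus t)\<^sup>2 * poly R (logistic t)\<bar> \<le> B3 * u\<^sup>2"
      unfolding abs_mult mult.commute[of B3] using a Bt by (intro mult_mono power_mono) auto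
    moreover have "u * B2 \<le> B2 * u\<^sup>2" "B1 \<le> B1 * u\<^sup>2"
      using u mult_left_mono[OF u(2) \<open>0 \<le> B2\<close>] mult_left_mono[OF u(3) \<open>0 \<le> B1\<close>]
      by (simp_all add: mult.commute)
    ultimately show ?thesis
      unfolding T sp_eval.simps u_def[symmetric] distrib_right
      using Bt abs_triangle_ineq[of "poly P (logistic t)" "softplus t * poly Q (logistic t)"]
        abs_triangle_ineq[of "poly P (logistic t) + softplus t * poly Q (logistic t)"
          "(softplus t)\<^sup>2 * poly R (logistic t)"]
      by linarith
  qed
  then show ?thesis by blast
qed

section \<open>Ridge potentials\<close>

fun quad_deriv :: "real \<Rightarrow> 'a::real_inner list \<Rightarrow> 'a \<Rightarrow> real" where
  "quad_deriv c [] z = c + inner z z / 2"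
| "quad_deriv c [v] z = inner z v"
| "quad_deriv c [v, u] z = inner v u"
| "quad_deriv c (v # u # w # vs) z = 0"

(* If d i k is the k-th derivative of f i, then ridge_deriv c w b d vs z is D^k V(z)(vs),
   k = length vs, for the ridge potential V(z) = c + |z|^2/2 + \<Sum>i. f i (<w i, z> + b i). *)
definition ridge_deriv :: "real \<Rightarrow> ('i::finite \<Rightarrow> 'a::real_inner) \<Rightarrow> ('i \<Rightarrow> real) \<Rightarrow>
    ('i \<Rightarrow> nat \<Rightarrow> real \<Rightarrow> real) \<Rightarrow> 'a list \<Rightarrow> 'a \<Rightarrow> real" where
  "ridge_deriv c w b d vs z = quad_deriv c vs z +
     (\<Sum>i\<in>UNIV. d i (length vs) (inner (w i) z + b i) * prod_list (map (inner (w i)) vs))"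

lemma has_derivative_quad_deriv: "(quad_deriv c vs has_derivative (\<lambda>v. quad_deriv c (v # vs) z)) (at z)"
proof -
  consider "vs = []" | v where "vs = [v]" | v u where "vs = [v, u]"
    | v u w vs' where "vs = v # u # w # vs'"
    by (metis list.exhaust)
  then show ?thesis
  proof cases
    case 1
    then have "quad_deriv c vs = (\<lambda>z. c + inner z z / 2)" by (simp add: fun_eq_iff)
    then show ?thesis using 1 by (auto intro!: derivative_eq_intros simp: inner_commute)
  next
    case (2 v)
    then have "quad_deriv c vs = (\<lambda>z. inner z v)" by (simp add: fun_eq_iff)
    then show ?thesis using 2 by (auto intro!: derivative_eq_intros)
  next
    case (3 v u)
    then have "quad_deriv c vs = (\<lambda>z. inner v u)" by (simp add: fun_eq_iff)
    then show ?thesis using 3 by (auto intro!: derivative_eq_intros)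
  next
    case (4 v u w vs')
    then have "quad_deriv c vs = (\<lambda>z. 0)" by (simp add: fun_eq_iff)
    then show ?thesis using 4 by (auto intro!: derivative_eq_intros)
  qed
qed

lemma has_derivative_ridge_deriv:
  assumes d: "\<And>i k t. (d i k has_real_derivative d i (Suc k) t) (at t)"
  shows "(ridge_deriv c w b d vs has_derivative (\<lambda>v. ridge_deriv c w b d (v # vs) z)) (at z)"
proof -
  have "((\<lambda>z. d i (length vs) (inner (w i) z + b i)) has_derivative
      (\<lambda>v. d i (Suc (length vs)) (inner (w i) z + b i) * inner (w i) v)) (at z)" for i
  proof -
    have "((\<lambda>z. inner (w i) z + b i) has_derivative inner (w i)) (at z)"
      by (auto intro!: derivative_eq_intros)
    from has_derivative_compose[OF this d[unfolded has_field_derivative_def]] show ?thesis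
      by (simp add: o_def)
  qed
  then have "((\<lambda>z. d i (length vs) (inner (w i) z + b i) * prod_list (map (inner (w i)) vs))
      has_derivative (\<lambda>v. d i (Suc (length vs)) (inner (w i) z + b i) *
        prod_list (map (inner (w i)) (v # vs)))) (at z)" for i
    by (rule has_derivative_eq_rhs[OF has_derivative_mult_left]) (simp add: fun_eq_iff mult_ac)
  then show ?thesis
    unfolding ridge_deriv_def[abs_def]
    by (auto intro!: has_derivative_add has_derivative_quad_deriv has_derivative_sum)
qed

lemma dderiv_ridge_deriv:
  assumes "\<And>i k t. (d i k has_real_derivative d i (Suc k) t) (at t)"
  shows "dderiv (ridge_deriv c w b d []) vs = ridge_deriv c w b d vs"
proof (induction vs)
  case (Cons v vs)
  show ?case
    by (rule ext) (simp add: Cons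
        frechet_derivative_at[OF has_derivative_ridge_deriv[where d=d, OF assms], symmetric])
qed simp
lemma abs_inner_le_norm: "norm v \<le> 1 \<Longrightarrow> \<bar>inner w v\<bar> \<le> norm w"
  using Cauchy_Schwarz_ineq2[of w v] mult_left_mono[of "norm v" 1 "norm w"] by simp

lemma abs_prod_list_inner_le:
  "\<forall>v\<in>set vs. norm v \<le> 1 \<Longrightarrow> \<bar>prod_list (map (inner w) vs)\<bar> \<le> norm w ^ length vs"
  by (induction vs) (auto simp: abs_mult abs_inner_le_norm intro!: mult_mono)

lemma abs_quad_deriv_le:
  fixes z :: "'a::real_inner"
  assumes "\<forall>v\<in>set vs. norm v \<le> 1"
  shows "\<bar>quad_deriv c vs z\<bar> \<le> (\<bar>c\<bar> + 1) * (1 + (norm z)\<^sup>2)"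
proof -
  have "norm z \<le> 1 + (norm z)\<^sup>2"
  proof (cases "norm z \<le> 1")
    case False
    then have "norm z * 1 \<le> norm z * norm z" by (intro mult_left_mono) auto
    then show ?thesis by (simp add: power2_eq_square)
  qed (simp add: add_increasing2)
  consider "vs = []" | v where "vs = [v]" | v u where "vs = [v, u]"
    | v u w vs' where "vs = v # u # w # vs'"
    by (metis list.exhaust)
  then have "\<bar>quad_deriv c vs z\<bar> \<le> \<bar>c\<bar> + 1 + (norm z)\<^sup>2"
  proof cases
    case 1
    have "0 \<le> (norm z)\<^sup>2" by simp
    then show ?thesis using abs_triangle_ineq[of c "(norm z)\<^sup>2 / 2"]
      unfolding 1 quad_deriv.simps power2_norm_eq_inner by linarith
  next
    case (2 v)
    then show ?thesis using assms abs_inner_le_norm[of v z] \<open>norm z \<le> 1 + (norm z)\<^sup>2\<close>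
      by (simp add: inner_commute)
  next
    case (3 v u)
    have "\<bar>inner v u\<bar> \<le> 1" "0 \<le> (norm z)\<^sup>2"
      using 3 assms abs_inner_le_norm[of u v] by auto
    then show ?thesis unfolding 3 quad_deriv.simps by linarith
  qed simp
  also have "\<dots> \<le> (\<bar>c\<bar> + 1) * (1 + (norm z)\<^sup>2)"
    by (simp add: algebra_simps)
  finally show ?thesis .
qed

lemma abs_ridge_term_le:
  fixes w z :: "'a::real_inner"
  assumes f: "\<And>t. \<bar>f t\<bar> \<le> C * (1 + \<bar>t\<bar>)\<^sup>2"
    and B: "norm w \<le> B" "\<bar>\<beta>\<bar> \<le> B" "1 \<le> B" and vs: "\<forall>v\<in>set vs. norm v \<le> 1"
  shows "\<bar>f (inner w z + \<beta>) * prod_list (map (inner w) vs)\<bar>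
    \<le> 8 * C * B ^ (length vs + 2) * (1 + (norm z)\<^sup>2)"
proof -
  define t where "t = inner w z + \<beta>"
  have "0 \<le> C" using f[of 0] by simp
  have "\<bar>inner w z\<bar> \<le> B * norm z"
    using Cauchy_Schwarz_ineq2[of w z] mult_right_mono[OF B(1) norm_ge_zero[of z]] by linarith
  moreover have "0 \<le> B * norm z" using B(3) by simp
  ultimately have "1 + \<bar>t\<bar> \<le> 2 * B * (1 + norm z)"
    using B(2,3) abs_triangle_ineq[of "inner w z" \<beta>] unfolding t_def by (simp add: algebra_simps)
  then have "(1 + \<bar>t\<bar>)\<^sup>2 \<le> (2 * B * (1 + norm z))\<^sup>2"
    by (rule power_mono) simp
  also have "\<dots> = 4 * B\<^sup>2 * (1 + norm z)\<^sup>2"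
    by (simp add: power_mult_distrib)
  also have "\<dots> \<le> 4 * B\<^sup>2 * (2 * (1 + (norm z)\<^sup>2))"
    using zero_le_power2[of "norm z - 1"] by (intro mult_left_mono) (auto simp: power2_eq_square algebra_simps)
  also have "\<dots> = 8 * B\<^sup>2 * (1 + (norm z)\<^sup>2)" by simp
  finally have "\<bar>f t\<bar> \<le> C * (8 * B\<^sup>2 * (1 + (norm z)\<^sup>2))"
    using f[of t] mult_left_mono[OF _ \<open>0 \<le> C\<close>] by (meson order.trans)
  moreover have "\<bar>prod_list (map (inner w) vs)\<bar> \<le> B ^ length vs"
    using abs_prod_list_inner_le[OF vs, of w] power_mono[OF B(1) norm_ge_zero] by (rule order.trans)
  ultimately have "\<bar>f t * prod_list (map (inner w) vs)\<bar>
      \<le> C * (8 * B\<^sup>2 * (1 + (norm z)\<^sup>2)) * B ^ length vs"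
    unfolding abs_mult using \<open>0 \<le> C\<close> by (intro mult_mono) auto
  also have "\<dots> = 8 * C * B ^ (length vs + 2) * (1 + (norm z)\<^sup>2)"
    by (simp add: power_add power2_eq_square algebra_simps)
  finally show ?thesis unfolding t_def .
qed

lemma ridge_deriv_growth:
  fixes w :: "'i::finite \<Rightarrow> 'a::real_inner"
  assumes C: "\<And>i t. \<bar>d i k t\<bar> \<le> C i * (1 + \<bar>t\<bar>)\<^sup>2"
  shows "\<exists>K>0. \<forall>z vs. length vs = k \<longrightarrow> (\<forall>v\<in>set vs. norm v \<le> 1) \<longrightarrow>
    \<bar>ridge_deriv c w b d vs z\<bar> \<le> K * (1 + (norm z)\<^sup>2)"
proof (intro exI conjI allI impI)
  define B where "B = 1 + (\<Sum>i\<in>UNIV. \<bar>b i\<bar> + norm (w i))"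
  have B: "norm (w i) \<le> B" "\<bar>b i\<bar> \<le> B" "1 \<le> B" for i
  proof -
    have "\<bar>b i\<bar> + norm (w i) \<le> (\<Sum>i\<in>UNIV. \<bar>b i\<bar> + norm (w i))"
      by (rule member_le_sum) auto
    moreover have "0 \<le> (\<Sum>i\<in>UNIV. \<bar>b i\<bar> + norm (w i))"
      by (intro sum_nonneg) auto
    ultimately show "norm (w i) \<le> B" "\<bar>b i\<bar> \<le> B" "1 \<le> B"
      using norm_ge_zero[of "w i"] abs_ge_zero[of "b i"] unfolding B_def by linarith+
  qed
  have "0 \<le> C i" for i using C[of i 0] by simp
  then show "0 < \<bar>c\<bar> + 1 + (\<Sum>i\<in>UNIV. 8 * C i * B ^ (k + 2))"
    using B(3) by (simp add: add_pos_nonneg sum_nonneg)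
  fix z and vs :: "'a list"
  assume "length vs = k" and vs: "\<forall>v\<in>set vs. norm v \<le> 1"
  have "\<bar>ridge_deriv c w b d vs z\<bar> \<le> \<bar>quad_deriv c vs z\<bar> +
      (\<Sum>i\<in>UNIV. \<bar>d i k (inner (w i) z + b i) * prod_list (map (inner (w i)) vs)\<bar>)"
    unfolding ridge_deriv_def \<open>length vs = k\<close>
    by (rule order.trans[OF abs_triangle_ineq add_left_mono[OF sum_abs]])
  also have "\<dots> \<le> (\<bar>c\<bar> + 1) * (1 + (norm z)\<^sup>2) +
      (\<Sum>i\<in>UNIV. 8 * C i * B ^ (k + 2) * (1 + (norm z)\<^sup>2))"
    using abs_ridge_term_le[OF C B vs] abs_quad_deriv_le[OF vs] \<open>length vs = k\<close>
    by (intro add_mono sum_mono) auto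
  also have "\<dots> = (\<bar>c\<bar> + 1 + (\<Sum>i\<in>UNIV. 8 * C i * B ^ (k + 2))) * (1 + (norm z)\<^sup>2)"
    by (simp only: sum_distrib_right distrib_right)
  finally show "\<bar>ridge_deriv c w b d vs z\<bar> \<le> \<dots>" .
qed

lemma smooth_poly_ridge:
  fixes w :: "'i::finite \<Rightarrow> 'a::real_inner"
  assumes d: "\<And>i k t. (d i k has_real_derivative d i (Suc k) t) (at t)"
    and growth: "\<And>i k. \<exists>C. \<forall>t. \<bar>d i k t\<bar> \<le> C * (1 + \<bar>t\<bar>)\<^sup>2"
  shows "smooth_poly (ridge_deriv c w b d [])"
  unfolding smooth_poly_def dderiv_ridge_deriv[where d=d, OF d]
proof (intro conjI allI)
  show "ridge_deriv c w b d vs differentiable (at z)" for vs z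
    using has_derivative_ridge_deriv[where d=d, OF d] unfolding differentiable_def by blast
  fix k
  obtain C where "\<And>i t. \<bar>d i k t\<bar> \<le> C i * (1 + \<bar>t\<bar>)\<^sup>2"
    using growth[of _ k] by metis
  from ridge_deriv_growth[where d=d and k=k, OF this] show "\<exists>C>0. \<exists>n. \<forall>z vs. length vs = k \<longrightarrow>
      (\<forall>v\<in>set vs. norm v \<le> 1) \<longrightarrow> \<bar>ridge_deriv c w b d vs z\<bar> \<le> C * (1 + norm z ^ n)"
    by blast
qed

lemma hessian_bounded_ridge:
  fixes w :: "'i::finite \<Rightarrow> 'a::real_inner"
  assumes d: "\<And>i k t. (d i k has_real_derivative d i (Suc k) t) (at t)"
    and K: "\<And>i t. \<bar>d i 2 t\<bar> \<le> K i"
  shows "hessian_bounded (ridge_deriv c w b d [])"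
  unfolding hessian_bounded_def dderiv_ridge_deriv[where d=d, OF d]
proof (intro exI conjI allI impI)
  have K0: "0 \<le> K i" for i using K[of i 0] by linarith
  then show "0 < 1 + (\<Sum>i\<in>UNIV. K i * (norm (w i))\<^sup>2)"
    by (simp add: add_pos_nonneg sum_nonneg)
  fix z u v :: 'a
  assume u: "norm u \<le> 1" and v: "norm v \<le> 1"
  have "\<bar>d i 2 (inner (w i) z + b i) * (inner (w i) u * inner (w i) v)\<bar> \<le> K i * (norm (w i))\<^sup>2" for i
    unfolding abs_mult power2_eq_square using K[of i] abs_inner_le_norm[OF u] abs_inner_le_norm[OF v] K0
    by (intro mult_mono) auto
  then have "\<bar>\<Sum>i\<in>UNIV. d i 2 (inner (w i) z + b i) * (inner (w i) u * inner (w i) v)\<bar>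
      \<le> (\<Sum>i\<in>UNIV. K i * (norm (w i))\<^sup>2)"
    by (rule order.trans[OF sum_abs sum_mono])
  moreover have "\<bar>inner u v\<bar> \<le> 1" using abs_inner_le_norm[OF v, of u] u by simp
  ultimately show "\<bar>ridge_deriv c w b d [u, v] z\<bar> \<le> 1 + (\<Sum>i\<in>UNIV. K i * (norm (w i))\<^sup>2)"
    unfolding ridge_deriv_def by (simp add: numeral_2_eq_2[symmetric])
qed

lemma ridge_bounded_below:
  assumes "\<And>i t. 0 \<le> d i 0 t"
  shows "c \<le> ridge_deriv c w b d [] z"
  using assms by (simp add: ridge_deriv_def sum_nonneg add_increasing2)

lemma C_beta_le: "0 \<le> \<beta> \<Longrightarrow> \<beta> \<le> 2/3 \<Longrightarrow> C_beta \<beta> \<le> \<beta> / 2"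
  unfolding C_beta_def using mult_right_mono[of \<beta> "2/3" \<beta>]
  by (simp add: divide_le_eq algebra_simps)

lemma assumption_A2_ridge:
  fixes w :: "'i::finite \<Rightarrow> 'a::real_inner"
  assumes d: "\<And>i k t. (d i k has_real_derivative d i (Suc k) t) (at t)"
    and dissipative: "\<And>\<beta> i t. 0 < \<beta> \<Longrightarrow> \<beta> \<le> 1/4 \<Longrightarrow> \<beta> * d i 0 t - d i 1 t * (t - b i) / 2 \<le> M i"
  shows "assumption_A2 (ridge_deriv c w b d []) \<gamma>"
proof -
  let ?V = "ridge_deriv c w b d []"
  define \<beta> where "\<beta> = 1 / (4 * (1 + \<gamma>\<^sup>2))"
  define \<alpha> where "\<alpha> = \<bar>c\<bar> + (\<Sum>i\<in>UNIV. \<bar>M i\<bar>) + 1"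
  have "0 < 1 + \<gamma>\<^sup>2" by (simp add: add_pos_nonneg)
  then have \<beta>: "0 < \<beta>" "\<beta> \<le> 1/4" "\<beta> * (1 + \<gamma>\<^sup>2) = 1/4"
    unfolding \<beta>_def by (auto simp: field_simps)
  have "\<beta> * ?V z + \<gamma>\<^sup>2 * C_beta \<beta> * (norm z)\<^sup>2 - \<alpha> \<le> 1/2 * frechet_derivative ?V (at z) z" for z
  proof -
    define q where "q = (norm z)\<^sup>2"
    define l where "l i = inner (w i) z + b i" for i
    define S0 where "S0 = (\<Sum>i\<in>UNIV. d i 0 (l i))"
    define S1 where "S1 = (\<Sum>i\<in>UNIV. d i 1 (l i) * (l i - b i))"
    have "frechet_derivative ?V (at z) z = ridge_deriv c w b d [z] z"
      using dderiv_ridge_deriv[where d=d, OF d, of c w b "[z]"] by (simp add: fun_eq_iff)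
    then have DV: "frechet_derivative ?V (at z) z = q + S1"
      by (simp add: ridge_deriv_def q_def S1_def l_def power2_norm_eq_inner)
    have V: "?V z = c + q / 2 + S0"
      by (simp add: ridge_deriv_def q_def S0_def l_def power2_norm_eq_inner)
    have "\<beta> * S0 - S1 / 2 = (\<Sum>i\<in>UNIV. \<beta> * d i 0 (l i) - d i 1 (l i) * (l i - b i) / 2)"
      unfolding S0_def S1_def by (simp add: sum_subtractf sum_distrib_left sum_divide_distrib)
    also have "\<dots> \<le> (\<Sum>i\<in>UNIV. \<bar>M i\<bar>)"
      using dissipative[OF \<beta>(1,2)] by (intro sum_mono) (meson abs_ge_self order.trans)
    finally have S: "\<beta> * S0 - S1 / 2 \<le> (\<Sum>i\<in>UNIV. \<bar>M i\<bar>)" .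
    have "\<gamma>\<^sup>2 * C_beta \<beta> * q \<le> \<gamma>\<^sup>2 * (\<beta> / 2) * q"
      using C_beta_le[of \<beta>] \<beta> by (intro mult_right_mono mult_left_mono) (auto simp: q_def)
    also have "\<dots> = \<beta> * (1 + \<gamma>\<^sup>2) * q / 2 - \<beta> * q / 2"
      by (simp add: algebra_simps)
    also have "\<dots> = q / 8 - \<beta> * q / 2"
      using \<beta>(3) by simp
    finally have Q: "\<gamma>\<^sup>2 * C_beta \<beta> * q \<le> q / 8 - \<beta> * (q / 2)" by simp
    have "\<beta> * c \<le> \<beta> * \<bar>c\<bar>" using \<beta>(1) by (intro mult_left_mono) auto
    also have "\<dots> \<le> \<bar>c\<bar>" using \<beta> by (intro mult_left_le_one_le) auto
    finally have "\<beta> * c \<le> \<bar>c\<bar>" .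
    moreover have "0 \<le> q" by (simp add: q_def)
    ultimately show ?thesis
      unfolding DV V \<alpha>_def distrib_left q_def[symmetric] using S Q by linarith
  qed
  moreover have "0 \<le> (\<Sum>i\<in>UNIV. \<bar>M i\<bar>)" by (intro sum_nonneg) auto
  then have "0 < \<alpha>" unfolding \<alpha>_def using abs_ge_zero[of c] by linarith
  ultimately show ?thesis
    unfolding assumption_A2_def using \<beta> by (intro exI[of _ \<alpha>] exI[of _ \<beta>]) auto
qed

section \<open>The softplus regression loss\<close>

definition gauss_loss_deriv :: "real \<Rightarrow> real \<Rightarrow> nat \<Rightarrow> real \<Rightarrow> real" where
  "gauss_loss_deriv \<xi> s2 k =
     sp_eval ((sp_diff ^^ k) ([:\<xi>\<^sup>2 / (2 * s2):], [:- \<xi> / s2:], [:1 / (2 * s2):]))"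

lemma has_real_derivative_gauss_loss_deriv:
  "(gauss_loss_deriv \<xi> s2 k has_real_derivative gauss_loss_deriv \<xi> s2 (Suc k) t) (at t)"
  unfolding gauss_loss_deriv_def by (simp add: has_real_derivative_sp_eval)

lemma gauss_loss_deriv_0: "gauss_loss_deriv \<xi> s2 0 t = (\<xi> - softplus t)\<^sup>2 / (2 * s2)"
  by (simp add: gauss_loss_deriv_def power2_eq_square algebra_simps
      add_divide_distrib diff_divide_distrib)

lemma gauss_loss_deriv_1: "gauss_loss_deriv \<xi> s2 1 t = (softplus t - \<xi>) * logistic t / s2"
  by (simp add: gauss_loss_deriv_def pderiv_pCons algebra_simps
      add_divide_distrib diff_divide_distrib)

lemma gauss_loss_deriv_2:
  "gauss_loss_deriv \<xi> s2 2 t =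
     ((logistic t)\<^sup>2 + (softplus t - \<xi>) * (logistic t * (1 - logistic t))) / s2"
  by (simp add: gauss_loss_deriv_def numeral_2_eq_2 pderiv_pCons power2_eq_square algebra_simps
      add_divide_distrib diff_divide_distrib)

lemma softplus_mult_logistic_deriv_le: "softplus t * (logistic t * (1 - logistic t)) \<le> 1"
proof -
  have "softplus t * (logistic t * (1 - logistic t)) \<le> exp t * (logistic t * (1 - logistic t))"
    using softplus_le_exp[of t] logistic_pos[of t] logistic_less_one[of t] by (intro mult_right_mono) auto
  also have "\<dots> = (logistic t)\<^sup>2"
    by (simp add: logistic_def field_simps power2_eq_square)
  also have "\<dots> \<le> 1"
    using logistic_pos[of t] logistic_less_one[of t] by (simp add: abs_square_le_1)
  finally show ?thesis .
qed

lemma abs_gauss_loss_deriv_2_le: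
  assumes "s2 > 0"
  shows "\<bar>gauss_loss_deriv \<xi> s2 2 t\<bar> \<le> (2 + \<bar>\<xi>\<bar>) / s2"
proof -
  define g where "g = logistic t * (1 - logistic t)"
  have "0 \<le> g" "g \<le> 1"
    using logistic_pos[of t] logistic_less_one[of t] unfolding g_def by (auto simp: mult_le_one)
  then have "\<bar>\<xi> * g\<bar> \<le> \<bar>\<xi>\<bar>"
    by (simp add: abs_mult mult_left_le)
  moreover have "0 \<le> softplus t * g" "softplus t * g \<le> 1" "(logistic t)\<^sup>2 \<le> 1"
    using softplus_mult_logistic_deriv_le[of t] softplus_nonneg[of t] \<open>0 \<le> g\<close>
      logistic_pos[of t] logistic_less_one[of t]
    unfolding g_def by (auto simp: abs_square_le_1)
  ultimately have "\<bar>(logistic t)\<^sup>2 + (softplus t - \<xi>) * g\<bar> \<le> 2 + \<bar>\<xi>\<bar>"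
    using zero_le_power2[of "logistic t"] unfolding abs_le_iff left_diff_distrib
    by (intro conjI) (elim conjE; linarith)+
  then show ?thesis
    using assms by (simp add: gauss_loss_deriv_2 g_def[symmetric] abs_divide divide_right_mono)
qed

lemma exp_mult_neg_le_one: "exp t * (- t) \<le> (1::real)"
proof -
  have "- t \<le> exp (- t)" using exp_ge_add_one_self[of "- t"] by linarith
  then have "exp t * (- t) \<le> exp t * exp (- t)" by (intro mult_left_mono) auto
  then show ?thesis by (simp add: exp_minus)
qed

lemma softplus_dissipative_nonpos:
  assumes "t \<le> 0" "\<beta> \<le> 1"
  shows "\<beta> * (\<xi> - softplus t)\<^sup>2 - (softplus t - \<xi>) * logistic t * (t - b)
    \<le> 2 * (\<bar>\<xi>\<bar> + \<bar>b\<bar> + 1)\<^sup>2"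
proof -
  define E where "E = \<bar>\<xi>\<bar> + \<bar>b\<bar> + 1"
  have "exp t \<le> 1" using assms(1) by simp
  then have a: "\<bar>softplus t - \<xi>\<bar> \<le> 1 + \<bar>\<xi>\<bar>"
    using softplus_le_exp[of t] softplus_nonneg[of t] by arith
  have "logistic t * (- t) \<le> 1"
    using mult_right_mono[OF logistic_le_exp[of t], of "- t"] exp_mult_neg_le_one[of t] assms(1)
    by linarith
  moreover have "logistic t * \<bar>b\<bar> \<le> \<bar>b\<bar>"
    using logistic_pos[of t] logistic_less_one[of t] by (intro mult_left_le_one_le) auto
  moreover have "\<bar>logistic t * (t - b)\<bar> \<le> logistic t * (- t + \<bar>b\<bar>)"
    unfolding abs_mult using logistic_pos[of t] assms(1) by (intro mult_mono) auto
  ultimately have "\<bar>logistic t * (t - b)\<bar> \<le> 1 + \<bar>b\<bar>"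
    unfolding distrib_left by linarith
  then have "\<bar>(softplus t - \<xi>) * logistic t * (t - b)\<bar> \<le> (1 + \<bar>\<xi>\<bar>) * (1 + \<bar>b\<bar>)"
    unfolding mult.assoc abs_mult[of "softplus t - \<xi>"] using a by (intro mult_mono) auto
  also have "\<dots> \<le> E\<^sup>2"
    unfolding E_def power2_eq_square by (intro mult_mono) auto
  finally have "\<bar>(softplus t - \<xi>) * logistic t * (t - b)\<bar> \<le> E\<^sup>2" .
  moreover have "(\<xi> - softplus t)\<^sup>2 \<le> E\<^sup>2"
    using a unfolding E_def by (subst abs_le_square_iff[symmetric]) arith
  then have "\<beta> * (\<xi> - softplus t)\<^sup>2 \<le> E\<^sup>2"
    using mult_right_mono[OF assms(2) zero_le_power2[of "\<xi> - softplus t"]] by linarith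
  ultimately show ?thesis
    unfolding E_def[symmetric] by (simp add: abs_le_iff)
qed

lemma softplus_dissipative_nonneg:
  assumes "0 \<le> t" "\<beta> \<le> 1/4"
  shows "\<beta> * (\<xi> - softplus t)\<^sup>2 - (softplus t - \<xi>) * logistic t * (t - b)
    \<le> (\<bar>\<xi>\<bar> + \<bar>b\<bar> + 1)\<^sup>2"
proof -
  define E where "E = \<bar>\<xi>\<bar> + \<bar>b\<bar> + 1"
  define u where "u = softplus t - \<xi>"
  define e where "e = \<xi> - b - (softplus t - t)"
  have "\<bar>e\<bar> \<le> E"
    using softplus_ge[of t] softplus_le[of t] assms(1) unfolding e_def E_def by arith
  have \<sigma>: "1/2 \<le> logistic t" "logistic t \<le> 1"
    using logistic_ge_half[OF assms(1)] logistic_less_one[of t] by auto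
  \<comment> \<open>writing \<open>t - b = u + e\<close> isolates the quadratic term \<open>(\<beta> - logistic t) u\<^sup>2 \<le> - u\<^sup>2/4\<close>\<close>
  have "\<beta> * (\<xi> - softplus t)\<^sup>2 - (softplus t - \<xi>) * logistic t * (t - b)
      = (\<beta> - logistic t) * u\<^sup>2 - logistic t * (u * e)"
    unfolding u_def e_def by (simp add: power2_eq_square algebra_simps)
  also have "\<dots> \<le> - u\<^sup>2 / 4 + \<bar>u\<bar> * E"
  proof -
    have "(\<beta> - logistic t) * u\<^sup>2 \<le> (- 1/4) * u\<^sup>2"
      using \<sigma> assms(2) by (intro mult_right_mono) auto
    moreover have "\<bar>logistic t * (u * e)\<bar> \<le> 1 * (\<bar>u\<bar> * E)"
      unfolding abs_mult using \<sigma> \<open>\<bar>e\<bar> \<le> E\<close> by (intro mult_mono) auto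
    ultimately show ?thesis by (simp add: abs_le_iff)
  qed
  also have "\<dots> \<le> E\<^sup>2"
    using zero_le_power2[of "\<bar>u\<bar> / 2 - E"] by (simp add: power2_eq_square algebra_simps)
  finally show ?thesis unfolding E_def .
qed

lemma gauss_loss_dissipative:
  assumes "0 < s2" "\<beta> \<le> 1/4"
  shows "\<beta> * gauss_loss_deriv \<xi> s2 0 t - gauss_loss_deriv \<xi> s2 1 t * (t - b) / 2
    \<le> (\<bar>\<xi>\<bar> + \<bar>b\<bar> + 1)\<^sup>2 / s2"
proof -
  have "\<beta> * gauss_loss_deriv \<xi> s2 0 t - gauss_loss_deriv \<xi> s2 1 t * (t - b) / 2
      = (\<beta> * (\<xi> - softplus t)\<^sup>2 - (softplus t - \<xi>) * logistic t * (t - b)) / (2 * s2)"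
    unfolding gauss_loss_deriv_0 gauss_loss_deriv_1 using assms(1) by (simp add: field_simps)
  also have "\<dots> \<le> 2 * (\<bar>\<xi>\<bar> + \<bar>b\<bar> + 1)\<^sup>2 / (2 * s2)"
  proof (rule divide_right_mono)
    show "\<beta> * (\<xi> - softplus t)\<^sup>2 - (softplus t - \<xi>) * logistic t * (t - b) \<le> 2 * (\<bar>\<xi>\<bar> + \<bar>b\<bar> + 1)\<^sup>2"
    proof (cases "t \<le> 0")
      case True
      then show ?thesis using softplus_dissipative_nonpos assms(2) by simp
    next
      case False
      then show ?thesis
        using softplus_dissipative_nonneg[of t \<beta> \<xi> b] assms(2) zero_le_power2[of "\<bar>\<xi>\<bar> + \<bar>b\<bar> + 1"]
        by linarith
    qed
  qed (use assms in simp)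
  finally show ?thesis by simp
qed

section \<open>The posterior potential\<close>

lemma prior_density_eq:
  "prior_density (z::real^'r) = (1 / sqrt (2 * pi)) ^ CARD('r) * exp (- (inner z z / 2))"
proof -
  have "prior_density z = (\<Prod>j\<in>UNIV. (1 / sqrt (2 * pi)) * exp (- (z $ j)\<^sup>2 / 2))"
    unfolding prior_density_def std_normal_density_def by simp
  also have "\<dots> = (1 / sqrt (2 * pi)) ^ CARD('r) * exp (\<Sum>j\<in>UNIV. - (z $ j)\<^sup>2 / 2)"
    by (subst prod.distrib) (simp add: exp_sum)
  also have "(\<Sum>j\<in>UNIV. - (z $ j)\<^sup>2 / 2) = - (inner z z / 2)"
    by (simp add: inner_vec_def power2_eq_square sum_negf sum_divide_distrib)
  finally show ?thesis .
qed

lemma lik_density_eq: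
  fixes W :: "real^'r^'m"
  assumes "0 < s2"
  shows "lik_density W b s2 x z = (1 / sqrt (2 * pi * s2)) ^ CARD('m) *
     exp (- (\<Sum>i\<in>UNIV. gauss_loss_deriv (x $ i) s2 0 (inner (W $ i) z + b $ i)))"
proof -
  have "lik_density W b s2 x z = (\<Prod>i\<in>UNIV. (1 / sqrt (2 * pi * s2)) *
      exp (- gauss_loss_deriv (x $ i) s2 0 (inner (W $ i) z + b $ i)))"
    unfolding lik_density_def normal_density_def gen_def
    using assms by (simp add: gauss_loss_deriv_0 matrix_vector_mul_component)
  also have "\<dots> = (1 / sqrt (2 * pi * s2)) ^ CARD('m) *
      exp (\<Sum>i\<in>UNIV. - gauss_loss_deriv (x $ i) s2 0 (inner (W $ i) z + b $ i))"
    by (subst prod.distrib) (simp add: exp_sum)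
  finally show ?thesis by (simp add: sum_negf)
qed

lemma joint_density_eq:
  fixes W :: "real^'r^'m"
  assumes "0 < s2"
  shows "\<exists>A>0. \<forall>z. prior_density z * lik_density W b s2 x z =
    A * exp (- ridge_deriv 0 (($) W) (($) b) (\<lambda>i. gauss_loss_deriv (x $ i) s2) [] z)"
proof (intro exI conjI allI)
  show "0 < (1 / sqrt (2 * pi)) ^ CARD('r) * (1 / sqrt (2 * pi * s2)) ^ CARD('m)"
    using assms by simp
  fix z :: "real^'r"
  have "exp (- ridge_deriv 0 (($) W) (($) b) (\<lambda>i. gauss_loss_deriv (x $ i) s2) [] z) =
      exp (- (inner z z / 2)) *
      exp (- (\<Sum>i\<in>UNIV. gauss_loss_deriv (x $ i) s2 0 (inner (W $ i) z + b $ i)))"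
    by (simp add: ridge_deriv_def exp_add[symmetric])
  then show "prior_density z * lik_density W b s2 x z = (1 / sqrt (2 * pi)) ^ CARD('r) *
      (1 / sqrt (2 * pi * s2)) ^ CARD('m) *
      exp (- ridge_deriv 0 (($) W) (($) b) (\<lambda>i. gauss_loss_deriv (x $ i) s2) [] z)"
    by (simp add: prior_density_eq lik_density_eq[OF assms] mult_ac)
qed

lemma prior_density_eq_prod_Basis:
  "prior_density (z::real^'r) = (\<Prod>u\<in>Basis. std_normal_density (inner z u))"
proof -
  have Basis: "(Basis :: (real^'r) set) = range (\<lambda>i. axis i 1)"
    by (auto simp: Basis_vec_def)
  have "(\<Prod>u\<in>Basis. std_normal_density (inner z u)) =
      (\<Prod>i\<in>UNIV. std_normal_density (inner z (axis i (1::real))))"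
    unfolding Basis by (subst prod.reindex) (auto simp: inj_on_def axis_eq_axis)
  then show ?thesis by (simp add: prior_density_def inner_axis)
qed

lemma integrable_prior_density: "integrable lborel (prior_density :: real^'r \<Rightarrow> real)"
proof (rule integrableI_nonneg)
  have prior: "prior_density = (\<lambda>z::real^'r. (1 / sqrt (2 * pi)) ^ CARD('r) * exp (- (inner z z / 2)))"
    by (simp add: fun_eq_iff prior_density_eq)
  have "(prior_density :: real^'r \<Rightarrow> real) \<in> borel_measurable borel"
    unfolding prior by (intro borel_measurable_continuous_onI continuous_intros) simp_all
  then show "(prior_density :: real^'r \<Rightarrow> real) \<in> borel_measurable lborel"
    by simp
  show "AE z in lborel. 0 \<le> prior_density (z::real^'r)"
    by (simp add: prior_density_def prod_nonneg)
  have "(\<integral>\<^sup>+z. ennreal (prior_density (z::real^'r)) \<partial>lborel) =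
      (\<integral>\<^sup>+z. (\<Prod>u\<in>Basis. (\<lambda>u t. ennreal (std_normal_density t)) u (inner (z::real^'r) u)) \<partial>lborel)"
    by (simp add: prior_density_eq_prod_Basis prod_ennreal)
  also have "\<dots> = (\<Prod>u\<in>(Basis :: (real^'r) set). (\<integral>\<^sup>+t. ennreal (std_normal_density t) \<partial>lborel))"
    by (rule nn_integral_lborel_prod) auto
  also have "(\<integral>\<^sup>+t. ennreal (std_normal_density t) \<partial>lborel) = 1"
    by (simp add: nn_integral_eq_integral)
  finally show "(\<integral>\<^sup>+z. ennreal (prior_density (z::real^'r)) \<partial>lborel) < \<infinity>" by simp
qed

lemma lik_density_le:
  fixes W :: "real^'r^'m"
  assumes "0 < s2"
  shows "lik_density W b s2 x z \<le> (1 / sqrt (2 * pi * s2)) ^ CARD('m)"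
proof -
  have "lik_density W b s2 x z \<le> (\<Prod>i\<in>(UNIV::'m set). 1 / sqrt (2 * pi * s2))"
    unfolding lik_density_def using assms
    by (intro prod_mono) (auto simp: normal_density_def intro!: divide_right_mono)
  then show ?thesis by simp
qed

lemma integrable_joint_density:
  fixes W :: "real^'r^'m"
  assumes "0 < s2"
  shows "integrable lborel (\<lambda>z::real^'r. prior_density z * lik_density W b s2 x z)"
proof (rule Bochner_Integration.integrable_bound[OF integrable_mult_right[OF integrable_prior_density]])
  obtain A where "\<And>z. prior_density z * lik_density W b s2 x z =
      A * exp (- ridge_deriv 0 (($) W) (($) b) (\<lambda>i. gauss_loss_deriv (x $ i) s2) [] z)"
    using joint_density_eq[OF assms] by blast
  moreover have "continuous_on UNIV (ridge_deriv 0 (($) W) (($) b) (\<lambda>i. gauss_loss_deriv (x $ i) s2) [])"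
    by (intro continuous_at_imp_continuous_on ballI has_derivative_continuous[OF
        has_derivative_ridge_deriv[where d="\<lambda>i. gauss_loss_deriv (x $ i) s2",
          OF has_real_derivative_gauss_loss_deriv]])
  ultimately show "(\<lambda>z. prior_density z * lik_density W b s2 x z) \<in> borel_measurable lborel"
    by (auto intro!: borel_measurable_continuous_onI continuous_intros)
  have "0 \<le> lik_density W b s2 x z" "0 \<le> prior_density z" for z :: "real^'r"
    by (auto simp: lik_density_def prior_density_def prod_nonneg)
  then have "norm (prior_density z * lik_density W b s2 x z) \<le>
      norm ((1 / sqrt (2 * pi * s2)) ^ CARD('m) * prior_density z)" for z :: "real^'r"
    using lik_density_le[OF assms, of W b x z] assms by (simp add: abs_mult mult.commute mult_left_mono)
  then show "AE z in lborel. norm (prior_density z * lik_density W b s2 x z) \<le>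
      norm ((1 / sqrt (2 * pi * s2)) ^ CARD('m) * prior_density (z::real^'r))"
    by simp
qed

lemma joint_density_integral_pos:
  fixes W :: "real^'r^'m"
  assumes "0 < s2"
  shows "0 < (\<integral>z. prior_density z * lik_density W b s2 x (z::real^'r) \<partial>lborel)"
proof -
  let ?f = "\<lambda>z::real^'r. prior_density z * lik_density W b s2 x z"
  have pos: "0 < ?f z" for z
    using joint_density_eq[OF assms, of W b x] by auto
  then have nonneg: "AE z in lborel. 0 \<le> ?f z" by (simp add: less_imp_le)
  have "(\<integral>z. ?f z \<partial>lborel) \<noteq> 0"
  proof
    assume "(\<integral>z. ?f z \<partial>lborel) = 0"
    then have "AE z in lborel. ?f z = 0"
      using integral_nonneg_eq_0_iff_AE[OF integrable_joint_density[OF assms] nonneg] by simp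
    then have "AE z::real^'r in lborel. False"
      using pos by (auto elim: AE_mp simp: less_le)
    then show False by (auto dest: AE_E2)
  qed
  moreover have "0 \<le> (\<integral>z. ?f z \<partial>lborel)"
    using nonneg by (rule integral_nonneg_AE)
  ultimately show ?thesis by simp
qed

lemma potential_eq_ridge:
  fixes W :: "real^'r^'m"
  assumes "0 < s2"
  obtains c where
    "potential W b s2 x = ridge_deriv c (($) W) (($) b) (\<lambda>i. gauss_loss_deriv (x $ i) s2) []"
proof -
  let ?U = "ridge_deriv 0 (($) W) (($) b) (\<lambda>i. gauss_loss_deriv (x $ i) s2) []"
  obtain A where "0 < A" and A: "\<And>z. prior_density z * lik_density W b s2 x z = A * exp (- ?U z)"
    using joint_density_eq[OF assms] by blast
  define I where "I = (\<integral>z. prior_density z * lik_density W b s2 x (z::real^'r) \<partial>lborel)"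
  have "0 < I" unfolding I_def by (rule joint_density_integral_pos[OF assms])
  have "potential W b s2 x z = - ln (A / I) + ?U z" for z
  proof -
    have "post_density W b s2 x z = prior_density z * lik_density W b s2 x z / I"
      by (simp add: post_density_def I_def)
    also have "\<dots> = A / I * exp (- ?U z)"
      by (simp add: A)
    finally show ?thesis
      unfolding potential_def using ln_mult[of "A / I" "exp (- ?U z)"] \<open>0 < A\<close> \<open>0 < I\<close> by simp
  qed
  then show ?thesis
    by (intro that[of "- ln (A / I)"]) (simp add: fun_eq_iff ridge_deriv_def)
qed

theorem corollary1:
  fixes W :: "real^'r^'m" and b :: "real^'m" and s2 :: real and x :: "real^'m"
  assumes "s2 > 0"
  defines "V \<equiv> potential W b s2 x"
  shows "(\<exists>c. \<forall>z. c \<le> V z) \<and> hessian_bounded V \<and> smooth_poly V \<and>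
         (\<forall>\<gamma>>0. assumption_A2 V \<gamma>)"
proof -
  define d where "d i = gauss_loss_deriv (x $ i) s2" for i
  have d: "\<And>i k t. (d i k has_real_derivative d i (Suc k) t) (at t)"
    unfolding d_def by (rule has_real_derivative_gauss_loss_deriv)
  obtain c where V: "V = ridge_deriv c (($) W) (($) b) d []"
    using potential_eq_ridge[OF assms(1)] unfolding V_def d_def by metis
  have "\<forall>z. c \<le> V z"
    unfolding V using assms(1) by (intro allI ridge_bounded_below) (simp add: d_def gauss_loss_deriv_0)
  moreover have "hessian_bounded V"
    unfolding V using d abs_gauss_loss_deriv_2_le[OF assms(1)] unfolding d_def by (rule hessian_bounded_ridge)
  moreover have "smooth_poly V"
    unfolding V using d by (rule smooth_poly_ridge) (simp add: d_def gauss_loss_deriv_def sp_eval_quadratic_growth)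
  moreover have "assumption_A2 V \<gamma>" for \<gamma>
    unfolding V using d gauss_loss_dissipative[OF assms(1)] unfolding d_def
    by (rule assumption_A2_ridge[where M = "\<lambda>i. (\<bar>x $ i\<bar> + \<bar>b $ i\<bar> + 1)\<^sup>2 / s2"])
  ultimately show ?thesis by blast
qed

end
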